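(* Let $G\subseteq\mathrm{GL}_n(\mathbb{R})$ be a group of order two with fundamental invariants $\pi_1,\dots,\pi_m$ and Hilbert map $\Pi=(\pi_1,\dots,\pi_m)$. For $i=1,\dots,n$ let $f_i=X_i-\mathcal{R}_G(X_i)$, and let $f=\sum_{i=1}^n f_i^2$. Then $f\in\mathbb{R}[\underline{X}]^G$ and \[\Pi(\mathbb{R}^n)=\{z\in V_{\mathbb{R}}(I_\Pi)\mid \phi_z(f)\ge0\}.\]
   Context: $\mathbb{R}[\underline{X}]=\mathbb{R}[X_1,\dots,X_n]$, $G$ acts by $h^\sigma(x)=h(\sigma^{-1}x)$, $\mathbb{R}[\underline{X}]^G=\mathbb{R}[\pi_1,\dots,\pi_m]$, and $\mathcal{R}_G(h)=\frac{1}{|G|}\sum_{\sigma\in G}h^\sigma$. $I_\Pi$ is the ideal of relations among $\pi_1,\dots,\pi_m$, $V_{\mathbb{R}}(I_\Pi)\subseteq\mathbb{R}^m$ its real zero set, and for $z\in V_{\mathbb{R}}(I_\Pi)$, $\phi_z:\mathbb{R}[\underline{X}]^G\to\mathbb{R}$ is $g(\pi_1,\dots,\pi_m)\mapsto g(z)$. *)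

theory Defs
  imports "HOL-Analysis.Analysis"
begin

text \<open>Real polynomials in the variables indexed by the finite type 'i, represented
  faithfully by their polynomial functions on real^'i (over the infinite field R a
  polynomial is determined by its function).\<close>
inductive_set polyfun :: "(real^'i::finite \<Rightarrow> real) set" where
  const: "(\<lambda>x. c) \<in> polyfun"
| var: "(\<lambda>x. x $ i) \<in> polyfun"
| add: "p \<in> polyfun \<Longrightarrow> q \<in> polyfun \<Longrightarrow> (\<lambda>x. p x + q x) \<in> polyfun"
| mult: "p \<in> polyfun \<Longrightarrow> q \<in> polyfun \<Longrightarrow> (\<lambda>x. p x * q x) \<in> polyfun"

definition homogeneous :: "(real^'i::finite \<Rightarrow> real) \<Rightarrow> nat \<Rightarrow> bool" where
  "homogeneous p d \<longleftrightarrow> (\<forall>t x. p (t *\<^sub>R x) = t ^ d * p x)"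

definition matrix_group :: "(real^'n^'n) set \<Rightarrow> bool" where
  "matrix_group G \<longleftrightarrow> G \<subseteq> {A. invertible A} \<and> mat 1 \<in> G \<and>
     (\<forall>A\<in>G. \<forall>B\<in>G. A ** B \<in> G) \<and> (\<forall>A\<in>G. matrix_inv A \<in> G)"

definition act :: "real^'n^'n \<Rightarrow> (real^'n \<Rightarrow> real) \<Rightarrow> (real^'n \<Rightarrow> real)" where
  "act \<sigma> h = (\<lambda>x. h (matrix_inv \<sigma> *v x))"

definition invariant_ring :: "(real^'n^'n::finite) set \<Rightarrow> (real^'n \<Rightarrow> real) set" where
  "invariant_ring G = {h \<in> polyfun. \<forall>\<sigma>\<in>G. act \<sigma> h = h}"

definition reynolds :: "(real^'n^'n) set \<Rightarrow> (real^'n \<Rightarrow> real) \<Rightarrow> (real^'n \<Rightarrow> real)" where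
  "reynolds G h = (\<lambda>x. (1 / real (card G)) * (\<Sum>\<sigma>\<in>G. act \<sigma> h x))"

definition hilbert_map :: "('m \<Rightarrow> (real^'n \<Rightarrow> real)) \<Rightarrow> real^'n \<Rightarrow> real^'m" where
  "hilbert_map \<pi> x = (\<chi> j. \<pi> j x)"

definition fundamental_invariants ::
  "(real^'n^'n::finite) set \<Rightarrow> ('m::finite \<Rightarrow> (real^'n \<Rightarrow> real)) \<Rightarrow> bool" where
  "fundamental_invariants G \<pi> \<longleftrightarrow>
     (\<forall>j. \<pi> j \<in> invariant_ring G \<and> (\<exists>d>0. homogeneous (\<pi> j) d)) \<and>
     (\<forall>h \<in> invariant_ring G. \<exists>g \<in> polyfun. h = g \<circ> hilbert_map \<pi>)"

definition relation_ideal :: "('m::finite \<Rightarrow> (real^'n \<Rightarrow> real)) \<Rightarrow> (real^'m \<Rightarrow> real) set" where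
  "relation_ideal \<pi> = {g \<in> polyfun. \<forall>x. g (hilbert_map \<pi> x) = 0}"

definition real_variety :: "(real^'m::finite \<Rightarrow> real) set \<Rightarrow> (real^'m) set" where
  "real_variety I = {z. \<forall>g\<in>I. g z = 0}"

text \<open>phi_z(g(pi_1,...,pi_m)) = g(z); well defined for z in V_R(I_Pi).\<close>
definition phi :: "('m::finite \<Rightarrow> (real^'n \<Rightarrow> real)) \<Rightarrow> real^'m \<Rightarrow> (real^'n \<Rightarrow> real) \<Rightarrow> real" where
  "phi \<pi> z h = (SOME g. g \<in> polyfun \<and> h = g \<circ> hilbert_map \<pi>) z"

end

theory Submission
  imports Defs
begin

text \<open>A group of order two is generated by an involution \<tau>, and every x splits as x = u + w
  with \<tau> u = u and \<tau> w = -w (u = proj_plus \<tau> x, w = proj_minus \<tau> x below). Writing a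
  polynomial as a polynomial in u and w and averaging over \<tau> shows that every invariant is a
  polynomial in u and in the products w_i w_j. Hence, for z in the real variety of the relations,
  \<phi>_z yields a vector a with \<tau> a = a and a matrix M = (\<phi>_z(w_i w_j)) satisfying the relations
  among the products w_i w_j: M is symmetric of rank at most one and \<tau> M = -M. Since the
  Reynolds operator maps X_i to u_i, f_i = w_i and the trace of M is \<phi>_z(f). If \<phi>_z(f) \<ge> 0,
  then M = y y^T with \<tau> y = -y, and z is the image of a + y under the Hilbert map.\<close>

lemma polyfun_sum:
  "finite S \<Longrightarrow> (\<And>i. i \<in> S \<Longrightarrow> p i \<in> polyfun) \<Longrightarrow> (\<lambda>x. \<Sum>i\<in>S. p i x) \<in> polyfun"
proof (induction S rule: finite_induct)
  case empty
  then show ?case by (simp add: polyfun.const)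
next
  case (insert a F)
  then have "(\<lambda>x. p a x + (\<Sum>i\<in>F. p i x)) \<in> polyfun"
    by (intro polyfun.add) auto
  with insert show ?case by simp
qed

lemma polyfun_cmult: "p \<in> polyfun \<Longrightarrow> (\<lambda>x. c * p x) \<in> polyfun"
  using polyfun.mult[OF polyfun.const] .

lemma polyfun_diff: "p \<in> polyfun \<Longrightarrow> q \<in> polyfun \<Longrightarrow> (\<lambda>x. p x - q x) \<in> polyfun"
  using polyfun.add[OF _ polyfun_cmult[of q "-1"], of p] by simp

lemma polyfun_matrix_vector_mult: "(\<lambda>x. (A *v x) $ i) \<in> polyfun"
proof -
  have "(\<lambda>x. \<Sum>j\<in>UNIV. A$i$j * x$j) \<in> polyfun"
    by (intro polyfun_sum polyfun_cmult polyfun.var) auto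
  then show ?thesis by (simp add: matrix_vector_mult_def)
qed

subsection \<open>Polynomials in a vector and a matrix\<close>

definition outer_prod :: "real^'n \<Rightarrow> real^'n^'n" where
  "outer_prod y = (\<chi> i j. y$i * y$j)"

lemma outer_prod_uminus [simp]: "outer_prod (- y) = outer_prod y"
  by (simp add: outer_prod_def)

lemma matrix_mul_outer_prod_component:
  "(A ** outer_prod y) $ i $ j = (A *v y) $ i * y $ j"
  by (simp add: outer_prod_def matrix_matrix_mult_def matrix_vector_mult_def
      sum_distrib_right mult.assoc)

inductive_set vec_mat_polyfun :: "(real^'n::finite \<Rightarrow> real^'n^'n \<Rightarrow> real) set" where
  const: "(\<lambda>a M. c) \<in> vec_mat_polyfun"
| vec: "(\<lambda>a M. a $ i) \<in> vec_mat_polyfun"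
| mat: "(\<lambda>a M. M $ i $ j) \<in> vec_mat_polyfun"
| add: "P \<in> vec_mat_polyfun \<Longrightarrow> Q \<in> vec_mat_polyfun \<Longrightarrow> (\<lambda>a M. P a M + Q a M) \<in> vec_mat_polyfun"
| mult: "P \<in> vec_mat_polyfun \<Longrightarrow> Q \<in> vec_mat_polyfun \<Longrightarrow> (\<lambda>a M. P a M * Q a M) \<in> vec_mat_polyfun"

lemma vec_mat_polyfun_sum:
  "finite S \<Longrightarrow> (\<And>i. i \<in> S \<Longrightarrow> P i \<in> vec_mat_polyfun) \<Longrightarrow>
    (\<lambda>a M. \<Sum>i\<in>S. P i a M) \<in> vec_mat_polyfun"
proof (induction S rule: finite_induct)
  case empty
  then show ?case by (simp add: vec_mat_polyfun.const)
next
  case (insert b F)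
  then have "(\<lambda>a M. P b a M + (\<Sum>i\<in>F. P i a M)) \<in> vec_mat_polyfun"
    by (intro vec_mat_polyfun.add) auto
  with insert show ?case by simp
qed

lemma vec_mat_polyfun_matrix_vector_mult: "(\<lambda>a M. (A *v a) $ i) \<in> vec_mat_polyfun"
  unfolding matrix_vector_mult_def
  by (auto intro!: vec_mat_polyfun_sum vec_mat_polyfun.mult vec_mat_polyfun.const
      vec_mat_polyfun.vec)

lemma vec_mat_polyfun_matrix_mul: "(\<lambda>a M. (A ** M) $ i $ j) \<in> vec_mat_polyfun"
  unfolding matrix_matrix_mult_def
  by (auto intro!: vec_mat_polyfun_sum vec_mat_polyfun.mult vec_mat_polyfun.const
      vec_mat_polyfun.mat)

lemma affine_sum_mult:
  fixes y :: "real^'n::finite"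
  shows "(A + (\<Sum>j\<in>UNIV. y$j * P j)) * (B + (\<Sum>j\<in>UNIV. y$j * Q j)) =
    (A * B + (\<Sum>j\<in>UNIV. \<Sum>k\<in>UNIV. (y$j * y$k) * (P j * Q k))) +
    (\<Sum>j\<in>UNIV. y$j * (A * Q j + B * P j))"
  by (simp add: algebra_simps sum_distrib_left sum_product sum.distrib)
    (subst sum.swap, simp add: algebra_simps)

lemma polyfun_parity_decomposition:
  fixes p :: "real^'n::finite \<Rightarrow> real"
  assumes "p \<in> polyfun"
  shows "\<exists>F\<in>vec_mat_polyfun. \<exists>E. (\<forall>j. E j \<in> vec_mat_polyfun) \<and>
    (\<forall>a y. p (a + y) = F a (outer_prod y) + (\<Sum>j\<in>UNIV. y$j * E j a (outer_prod y)))"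
  using assms
proof (induction rule: polyfun.induct)
  case (const c)
  show ?case
    by (rule bexI[of _ "\<lambda>a M. c"], rule exI[of _ "\<lambda>j a M. 0"])
      (auto intro: vec_mat_polyfun.const)
next
  case (var i)
  show ?case
    by (intro bexI[of _ "\<lambda>a M. a $ i"] exI[of _ "\<lambda>j a M. if j = i then 1 else 0"])
      (auto intro: vec_mat_polyfun.const vec_mat_polyfun.vec simp: of_bool_def[symmetric])
next
  case (add p q)
  then obtain F1 E1 F2 E2 where
    "F1 \<in> vec_mat_polyfun" "\<forall>j. E1 j \<in> vec_mat_polyfun"
    "\<forall>a y. p (a + y) = F1 a (outer_prod y) + (\<Sum>j\<in>UNIV. y$j * E1 j a (outer_prod y))"
    "F2 \<in> vec_mat_polyfun" "\<forall>j. E2 j \<in> vec_mat_polyfun"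
    "\<forall>a y. q (a + y) = F2 a (outer_prod y) + (\<Sum>j\<in>UNIV. y$j * E2 j a (outer_prod y))"
    by blast
  then show ?case
    by (intro bexI[of _ "\<lambda>a M. F1 a M + F2 a M"] exI[of _ "\<lambda>j a M. E1 j a M + E2 j a M"])
      (auto intro: vec_mat_polyfun.add simp: distrib_left sum.distrib)
next
  case (mult p q)
  then obtain F1 E1 F2 E2 where
    F1: "F1 \<in> vec_mat_polyfun" "\<forall>j. E1 j \<in> vec_mat_polyfun"
    "\<forall>a y. p (a + y) = F1 a (outer_prod y) + (\<Sum>j\<in>UNIV. y$j * E1 j a (outer_prod y))" and
    F2: "F2 \<in> vec_mat_polyfun" "\<forall>j. E2 j \<in> vec_mat_polyfun"
    "\<forall>a y. q (a + y) = F2 a (outer_prod y) + (\<Sum>j\<in>UNIV. y$j * E2 j a (outer_prod y))"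
    by blast
  \<comment> \<open>the product of the two odd parts is even, as y_j y_k is an entry of outer_prod y\<close>
  define F where "F = (\<lambda>a M. F1 a M * F2 a M +
    (\<Sum>j\<in>UNIV. \<Sum>k\<in>UNIV. M$j$k * (E1 j a M * E2 k a M)))"
  define E where "E = (\<lambda>j a M. F1 a M * E2 j a M + F2 a M * E1 j a M)"
  have "F \<in> vec_mat_polyfun"
    unfolding F_def using F1 F2
    by (intro vec_mat_polyfun.add vec_mat_polyfun.mult vec_mat_polyfun_sum vec_mat_polyfun.mat)
      auto
  moreover have "\<forall>j. E j \<in> vec_mat_polyfun"
    unfolding E_def
    by (intro allI vec_mat_polyfun.add vec_mat_polyfun.mult) (use F1 F2 in auto)
  moreover have "p (a + y) * q (a + y) =
      F a (outer_prod y) + (\<Sum>j\<in>UNIV. y$j * E j a (outer_prod y))" for a y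
    unfolding F1(3)[rule_format] F2(3)[rule_format] affine_sum_mult F_def E_def
    by (simp add: outer_prod_def)
  ultimately show ?case by blast
qed

lemma polyfun_even_part:
  assumes "p \<in> polyfun"
  obtains F where "F \<in> vec_mat_polyfun" "\<And>a y. p (a + y) + p (a - y) = 2 * F a (outer_prod y)"
proof -
  obtain F E where "F \<in> vec_mat_polyfun"
    and FE: "\<And>a y. p (a + y) = F a (outer_prod y) + (\<Sum>j\<in>UNIV. y$j * E j a (outer_prod y))"
    using polyfun_parity_decomposition[OF assms] by blast
  have "p (a + y) + p (a - y) = 2 * F a (outer_prod y)" for a y
    using FE[of a y] FE[of a "- y"] by (simp add: sum_negf)
  with \<open>F \<in> vec_mat_polyfun\<close> show thesis by (rule that)
qed

definition proj_plus :: "real^'n^'n \<Rightarrow> real^'n \<Rightarrow> real^'n" where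
  "proj_plus \<tau> x = (1/2) *\<^sub>R (x + \<tau> *v x)"

definition proj_minus :: "real^'n^'n \<Rightarrow> real^'n \<Rightarrow> real^'n" where
  "proj_minus \<tau> x = (1/2) *\<^sub>R (x - \<tau> *v x)"

lemma proj_plus_add_proj_minus: "proj_plus \<tau> x + proj_minus \<tau> x = x"
  by (simp add: proj_plus_def proj_minus_def vec_eq_iff algebra_simps)

lemma proj_plus_diff_proj_minus: "proj_plus \<tau> x - proj_minus \<tau> x = \<tau> *v x"
  by (simp add: proj_plus_def proj_minus_def vec_eq_iff algebra_simps)

lemma polyfun_proj_plus: "(\<lambda>x. proj_plus \<tau> x $ i) \<in> polyfun"
  using polyfun_cmult[OF polyfun.add[OF polyfun.var polyfun_matrix_vector_mult], of "1/2"]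
  by (simp add: proj_plus_def)

lemma polyfun_proj_minus: "(\<lambda>x. proj_minus \<tau> x $ i) \<in> polyfun"
  using polyfun_cmult[OF polyfun_diff[OF polyfun.var polyfun_matrix_vector_mult], of "1/2"]
  by (simp add: proj_minus_def)

lemma proj_plus_eigen_sum:
  "\<tau> *v a = a \<Longrightarrow> \<tau> *v y = - y \<Longrightarrow> proj_plus \<tau> (a + y) = a"
  by (simp add: proj_plus_def matrix_vector_right_distrib vec_eq_iff)

lemma proj_minus_eigen_sum:
  "\<tau> *v a = a \<Longrightarrow> \<tau> *v y = - y \<Longrightarrow> proj_minus \<tau> (a + y) = y"
  by (simp add: proj_minus_def matrix_vector_right_distrib vec_eq_iff)

context
  fixes \<tau> :: "real^'n::finite^'n"
  assumes involutive: "\<tau> ** \<tau> = mat 1"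
begin

lemma involution_apply_twice [simp]: "\<tau> *v (\<tau> *v x) = x"
  by (simp add: matrix_vector_mul_assoc involutive)

lemma proj_plus_involution [simp]: "proj_plus \<tau> (\<tau> *v x) = proj_plus \<tau> x"
  by (simp add: proj_plus_def algebra_simps)

lemma proj_minus_involution [simp]: "proj_minus \<tau> (\<tau> *v x) = - proj_minus \<tau> x"
  by (simp add: proj_minus_def algebra_simps)

lemma involution_proj_plus: "\<tau> *v proj_plus \<tau> x = proj_plus \<tau> x"
  by (simp add: proj_plus_def matrix_vector_right_distrib matrix_vector_mult_scaleR add.commute)

lemma involution_proj_minus: "\<tau> *v proj_minus \<tau> x = - proj_minus \<tau> x"
  by (simp add: proj_minus_def matrix_vector_mult_diff_distrib matrix_vector_mult_scaleR
      algebra_simps)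

lemma matrix_inv_involution: "matrix_inv \<tau> = \<tau>"
proof -
  have "\<exists>A'. \<tau> ** A' = mat 1 \<and> A' ** \<tau> = mat 1"
    using involutive by blast
  then have inv: "\<tau> ** matrix_inv \<tau> = mat 1" "matrix_inv \<tau> ** \<tau> = mat 1"
    unfolding matrix_inv_def by (metis (mono_tags, lifting) someI_ex)+
  have "matrix_inv \<tau> = matrix_inv \<tau> ** (\<tau> ** \<tau>)"
    by (simp add: involutive)
  also have "\<dots> = \<tau>"
    by (simp add: matrix_mul_assoc inv)
  finally show ?thesis .
qed

end

lemma matrix_inv_mat_1 [simp]: "matrix_inv (mat 1 :: real^'n::finite^'n) = mat 1"
  by (rule matrix_inv_involution) simp

lemma invariant_polyfun_involution:
  assumes "p \<in> polyfun" "\<And>x. p (\<tau> *v x) = p x"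
  obtains F where "F \<in> vec_mat_polyfun"
    "\<And>x. p x = F (proj_plus \<tau> x) (outer_prod (proj_minus \<tau> x))"
proof -
  obtain F where F: "F \<in> vec_mat_polyfun" "\<And>a y. p (a + y) + p (a - y) = 2 * F a (outer_prod y)"
    using polyfun_even_part[OF assms(1)] by blast
  have "p x = F (proj_plus \<tau> x) (outer_prod (proj_minus \<tau> x))" for x
    using F(2)[of "proj_plus \<tau> x" "proj_minus \<tau> x"] assms(2)[of x]
    by (simp add: proj_plus_add_proj_minus proj_plus_diff_proj_minus)
  with F(1) show thesis by (rule that)
qed

lemma symmetric_rank_le_one_outer_prod:
  fixes M :: "real^'n::finite^'n"
  assumes sym: "\<And>i j. M$i$j = M$j$i"
    and minors: "\<And>i j k l. M$i$j * M$k$l = M$i$l * M$k$j"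
    and trace: "0 \<le> (\<Sum>i\<in>UNIV. M$i$i)"
  obtains y where "M = outer_prod y"
proof (cases "\<exists>k. M$k$k > 0")
  case True
  then obtain k where k: "M$k$k > 0" by blast
  define y where "y = (\<chi> i. M$i$k / sqrt (M$k$k))"
  have "M$i$j = y$i * y$j" for i j
  proof -
    have "y$i * y$j = M$i$k * M$k$j / M$k$k"
      using k sym[of j k] by (simp add: y_def)
    also have "\<dots> = M$i$j"
      using k minors[of i j k k] by (simp add: field_simps)
    finally show ?thesis by simp
  qed
  then show thesis by (intro that[of y]) (simp add: outer_prod_def vec_eq_iff)
next
  case False
  then have "(\<Sum>i\<in>UNIV. - M$i$i) = 0"
    using trace sum_nonpos[of UNIV "\<lambda>i. M$i$i"] by (simp add: sum_negf not_less)
  then have "\<forall>i\<in>UNIV. - M$i$i = 0"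
    using False by (subst (asm) sum_nonneg_eq_0_iff) (auto simp: not_less)
  then have "M$i$j = 0" for i j
    using minors[of i j j i] sym[of i j] by simp
  then show thesis by (intro that[of 0]) (simp add: outer_prod_def vec_eq_iff)
qed

lemma outer_prod_eigenvector:
  assumes "A ** outer_prod y = - outer_prod y"
  shows "A *v y = - y"
proof (cases "y = 0")
  case False
  then obtain j where j: "y$j \<noteq> 0" by (metis vec_eq_iff zero_index)
  have "(A *v y)$i * y$j = - y$i * y$j" for i
    using arg_cong[OF assms, of "\<lambda>M. M$i$j"]
    by (simp only: matrix_mul_outer_prod_component) (simp add: outer_prod_def)
  with j show ?thesis by (simp add: vec_eq_iff) (metis minus_mult_left mult_right_cancel)
qed simp

lemma matrix_group_card_2:
  assumes "matrix_group G" "card G = 2"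
  obtains \<tau> where "G = {mat 1, \<tau>}" "\<tau> \<noteq> mat 1" "\<tau> ** \<tau> = mat 1"
proof -
  have grp: "G \<subseteq> {A. invertible A}" "mat 1 \<in> G" "\<forall>A\<in>G. \<forall>B\<in>G. A ** B \<in> G"
    using assms(1) unfolding matrix_group_def by auto
  obtain \<tau> where G: "G = {mat 1, \<tau>}" and ne: "\<tau> \<noteq> mat 1"
    using assms(2) grp(2) by (metis card_2_iff doubleton_eq_iff insertE singletonD)
  then obtain \<tau>' where inv: "\<tau> ** \<tau>' = mat 1"
    using grp(1) by (auto simp: invertible_def)
  have "\<tau> ** \<tau> \<noteq> \<tau>"
  proof
    assume idem: "\<tau> ** \<tau> = \<tau>"
    have "\<tau> = \<tau> ** (\<tau> ** \<tau>')" using inv by simp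
    also have "\<dots> = (\<tau> ** \<tau>) ** \<tau>'" by (simp only: matrix_mul_assoc)
    also have "\<dots> = mat 1" using idem inv by simp
    finally show False using ne by simp
  qed
  moreover have "\<tau> ** \<tau> \<in> G" using grp(3) G by auto
  ultimately show thesis using G ne that by auto
qed

lemma invariant_ring_involution_group:
  assumes "G = {mat 1, \<tau>}" "\<tau> ** \<tau> = mat 1"
  shows "invariant_ring G = {h \<in> polyfun. \<forall>x. h (\<tau> *v x) = h x}"
  using assms by (auto simp: invariant_ring_def act_def matrix_inv_involution fun_eq_iff)

lemma reynolds_involution_group_component:
  assumes "G = {mat 1, \<tau>}" "\<tau> \<noteq> mat 1" "\<tau> ** \<tau> = mat 1"
  shows "reynolds G (\<lambda>y. y $ i) x = proj_plus \<tau> x $ i"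
  using assms
  by (simp add: reynolds_def act_def matrix_inv_involution proj_plus_def algebra_simps)

subsection \<open>The evaluation map \<phi>_z\<close>

lemma hilbert_map_in_real_variety: "hilbert_map \<pi> x \<in> real_variety (relation_ideal \<pi>)"
  unfolding real_variety_def relation_ideal_def by blast

lemma real_variety_relation_ideal_eq:
  assumes "g1 \<in> polyfun" "g2 \<in> polyfun" "\<And>x. g1 (hilbert_map \<pi> x) = g2 (hilbert_map \<pi> x)"
    and "z \<in> real_variety (relation_ideal \<pi>)"
  shows "g1 z = g2 z"
proof -
  have "(\<lambda>y. g1 y - g2 y) \<in> relation_ideal \<pi>"
    unfolding relation_ideal_def using assms(1-3) polyfun_diff by auto
  then have "g1 z - g2 z = 0"
    using assms(4) unfolding real_variety_def by fastforce
  then show ?thesis by simp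
qed

text \<open>Independence of the choice of g is where z \<in> V_R(I_\<Pi>) is used.\<close>

lemma phi_eq:
  assumes "g \<in> polyfun" "\<And>x. h x = g (hilbert_map \<pi> x)"
    and "z \<in> real_variety (relation_ideal \<pi>)"
  shows "phi \<pi> z h = g z"
proof -
  define g' where "g' = (SOME g. g \<in> polyfun \<and> h = g \<circ> hilbert_map \<pi>)"
  have "g \<in> polyfun \<and> h = g \<circ> hilbert_map \<pi>"
    using assms(1,2) by auto
  then have g': "g' \<in> polyfun \<and> h = g' \<circ> hilbert_map \<pi>"
    unfolding g'_def by (rule someI[where P = "\<lambda>g. g \<in> polyfun \<and> h = g \<circ> hilbert_map \<pi>"])
  have "g' z = g z"
  proof (rule real_variety_relation_ideal_eq[OF _ assms(1) _ assms(3)])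
    show "g' \<in> polyfun" using g' ..
    show "g' (hilbert_map \<pi> x) = g (hilbert_map \<pi> x)" for x
      using g' assms(2)[of x] by simp
  qed
  then show ?thesis by (simp add: phi_def g'_def)
qed

lemma fundamental_invariants_pullback:
  assumes "fundamental_invariants G \<pi>" "h \<in> invariant_ring G"
  obtains g where "g \<in> polyfun" "h = g \<circ> hilbert_map \<pi>"
  using assms unfolding fundamental_invariants_def by blast

lemma fundamental_invariants_invariant_ring:
  "fundamental_invariants G \<pi> \<Longrightarrow> \<pi> j \<in> invariant_ring G"
  unfolding fundamental_invariants_def by blast

lemma phi_invariant_ring:
  assumes "fundamental_invariants G \<pi>" "z \<in> real_variety (relation_ideal \<pi>)"
    and "h \<in> invariant_ring G"
  shows "\<exists>g\<in>polyfun. (\<forall>x. h x = g (hilbert_map \<pi> x)) \<and> g z = phi \<pi> z h"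
proof -
  obtain g where g: "g \<in> polyfun" "h = g \<circ> hilbert_map \<pi>"
    using fundamental_invariants_pullback[OF assms(1,3)] .
  have "phi \<pi> z h = g z"
    by (rule phi_eq[OF g(1) _ assms(2)]) (simp add: g(2))
  with g show ?thesis by auto
qed

lemma phi_hilbert_map:
  assumes "fundamental_invariants G \<pi>" "h \<in> invariant_ring G"
  shows "phi \<pi> (hilbert_map \<pi> x) h = h x"
  using phi_invariant_ring[OF assms(1) hilbert_map_in_real_variety[of \<pi> x] assms(2)] by auto

lemma phi_vec_mat_polyfun:
  assumes fund: "fundamental_invariants G \<pi>"
    and z: "z \<in> real_variety (relation_ideal \<pi>)"
    and A: "\<And>i. (\<lambda>x. A x $ i) \<in> invariant_ring G"
    and B: "\<And>i j. (\<lambda>x. B x $ i $ j) \<in> invariant_ring G"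
    and F: "F \<in> vec_mat_polyfun"
  shows "phi \<pi> z (\<lambda>x. F (A x) (B x)) =
    F (\<chi> i. phi \<pi> z (\<lambda>x. A x $ i)) (\<chi> i j. phi \<pi> z (\<lambda>x. B x $ i $ j))"
proof -
  let ?a = "\<chi> i. phi \<pi> z (\<lambda>x. A x $ i)" and ?M = "\<chi> i j. phi \<pi> z (\<lambda>x. B x $ i $ j)"
  have "\<exists>g\<in>polyfun. (\<forall>x. F (A x) (B x) = g (hilbert_map \<pi> x)) \<and> g z = F ?a ?M"
    using F
  proof (induction rule: vec_mat_polyfun.induct)
    case (const c)
    show ?case by (auto intro: polyfun.const)
  next
    case (vec i)
    show ?case using phi_invariant_ring[OF fund z A[of i]] by simp
  next
    case (mat i j)
    show ?case using phi_invariant_ring[OF fund z B[of i j]] by simp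
  next
    case (add P Q)
    then obtain gP gQ where "gP \<in> polyfun" "\<forall>x. P (A x) (B x) = gP (hilbert_map \<pi> x)"
      "gP z = P ?a ?M" "gQ \<in> polyfun" "\<forall>x. Q (A x) (B x) = gQ (hilbert_map \<pi> x)"
      "gQ z = Q ?a ?M"
      by blast
    then show ?case
      by (intro bexI[of _ "\<lambda>y. gP y + gQ y"]) (auto intro: polyfun.add)
  next
    case (mult P Q)
    then obtain gP gQ where "gP \<in> polyfun" "\<forall>x. P (A x) (B x) = gP (hilbert_map \<pi> x)"
      "gP z = P ?a ?M" "gQ \<in> polyfun" "\<forall>x. Q (A x) (B x) = gQ (hilbert_map \<pi> x)"
      "gQ z = Q ?a ?M"
      by blast
    then show ?case
      by (intro bexI[of _ "\<lambda>y. gP y * gQ y"]) (auto intro: polyfun.mult)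
  qed
  then obtain g where g: "g \<in> polyfun" "\<And>x. F (A x) (B x) = g (hilbert_map \<pi> x)"
    "g z = F ?a ?M"
    by blast
  show ?thesis
    using phi_eq[OF g(1,2) z] g(3) by simp
qed

subsection \<open>Invariants of an involution group\<close>

locale involution_group =
  fixes G :: "(real^'n::finite^'n) set" and \<tau> :: "real^'n^'n"
    and \<pi> :: "'m::finite \<Rightarrow> real^'n \<Rightarrow> real"
  assumes G_eq: "G = {mat 1, \<tau>}" and involutive: "\<tau> ** \<tau> = mat 1"
    and fundamental: "fundamental_invariants G \<pi>"
begin

definition phi_plus :: "real^'m \<Rightarrow> real^'n" where
  "phi_plus z = (\<chi> i. phi \<pi> z (\<lambda>x. proj_plus \<tau> x $ i))"

definition phi_gram :: "real^'m \<Rightarrow> real^'n^'n" where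
  "phi_gram z = (\<chi> i j. phi \<pi> z (\<lambda>x. outer_prod (proj_minus \<tau> x) $ i $ j))"

lemma invariant_ring_eq: "invariant_ring G = {h \<in> polyfun. \<forall>x. h (\<tau> *v x) = h x}"
  using invariant_ring_involution_group[OF G_eq involutive] .

lemma phi_proj_polyfun:
  assumes "z \<in> real_variety (relation_ideal \<pi>)" "F \<in> vec_mat_polyfun"
  shows "phi \<pi> z (\<lambda>x. F (proj_plus \<tau> x) (outer_prod (proj_minus \<tau> x))) =
    F (phi_plus z) (phi_gram z)"
  unfolding phi_plus_def phi_gram_def
proof (rule phi_vec_mat_polyfun[OF fundamental assms(1) _ _ assms(2)])
  show "(\<lambda>x. proj_plus \<tau> x $ i) \<in> invariant_ring G" for i
    using involutive by (simp add: invariant_ring_eq polyfun_proj_plus)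
  show "(\<lambda>x. outer_prod (proj_minus \<tau> x) $ i $ j) \<in> invariant_ring G" for i j
    using involutive
    by (simp add: invariant_ring_eq outer_prod_def polyfun.mult polyfun_proj_minus)
qed

lemma phi_proj_transfer:
  assumes "z \<in> real_variety (relation_ideal \<pi>)" "F \<in> vec_mat_polyfun" "F' \<in> vec_mat_polyfun"
    and "\<And>x. F (proj_plus \<tau> x) (outer_prod (proj_minus \<tau> x)) =
      F' (proj_plus \<tau> x) (outer_prod (proj_minus \<tau> x))"
  shows "F (phi_plus z) (phi_gram z) = F' (phi_plus z) (phi_gram z)"
  using phi_proj_polyfun[OF assms(1,2)] phi_proj_polyfun[OF assms(1,3)] assms(4) by simp

lemma involution_phi_plus:
  assumes "z \<in> real_variety (relation_ideal \<pi>)"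
  shows "\<tau> *v phi_plus z = phi_plus z"
proof -
  have "(\<tau> *v phi_plus z) $ i = phi_plus z $ i" for i
  proof (rule phi_proj_transfer[OF assms, of "\<lambda>a M. (\<tau> *v a) $ i" "\<lambda>a M. a $ i"])
    show "(\<tau> *v proj_plus \<tau> x) $ i = proj_plus \<tau> x $ i" for x
      by (simp add: involution_proj_plus[OF involutive])
  qed (rule vec_mat_polyfun_matrix_vector_mult vec_mat_polyfun.vec)+
  then show ?thesis by (simp add: vec_eq_iff)
qed

lemma phi_gram_outer_prod:
  assumes z: "z \<in> real_variety (relation_ideal \<pi>)"
    and nonneg: "0 \<le> phi \<pi> z (\<lambda>x. \<Sum>i\<in>UNIV. (proj_minus \<tau> x $ i)\<^sup>2)"
  obtains y where "phi_gram z = outer_prod y" "\<tau> *v y = - y"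
proof -
  let ?M = "phi_gram z"
  have "?M$i$j = ?M$j$i" for i j
    by (rule phi_proj_transfer[OF z, of "\<lambda>a M. M$i$j" "\<lambda>a M. M$j$i"])
      (auto intro: vec_mat_polyfun.mat simp: outer_prod_def)
  moreover have "?M$i$j * ?M$k$l = ?M$i$l * ?M$k$j" for i j k l
    by (rule phi_proj_transfer[OF z, of "\<lambda>a M. M$i$j * M$k$l" "\<lambda>a M. M$i$l * M$k$j"])
      (auto intro: vec_mat_polyfun.mult vec_mat_polyfun.mat simp: outer_prod_def)
  moreover have "0 \<le> (\<Sum>i\<in>UNIV. ?M$i$i)"
  proof -
    have "(\<lambda>a M. \<Sum>i\<in>UNIV. M$i$i) \<in> vec_mat_polyfun"
      by (intro vec_mat_polyfun_sum vec_mat_polyfun.mat) simp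
    from phi_proj_polyfun[OF z this] nonneg show ?thesis
      by (simp add: outer_prod_def power2_eq_square)
  qed
  ultimately obtain y where y: "?M = outer_prod y"
    by (rule symmetric_rank_le_one_outer_prod)
  have "(\<tau> ** ?M) $ i $ j + ?M $ i $ j = 0" for i j
  proof (rule phi_proj_transfer[OF z, of "\<lambda>a M. (\<tau> ** M) $ i $ j + M $ i $ j" "\<lambda>a M. 0"])
    show "(\<tau> ** outer_prod (proj_minus \<tau> x)) $ i $ j + outer_prod (proj_minus \<tau> x) $ i $ j = 0"
      for x
      by (simp only: matrix_mul_outer_prod_component involution_proj_minus[OF involutive])
        (simp add: outer_prod_def)
  qed (rule vec_mat_polyfun.add vec_mat_polyfun_matrix_mul vec_mat_polyfun.mat
      vec_mat_polyfun.const)+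
  then have "\<tau> ** outer_prod y = - outer_prod y"
    by (simp add: y[symmetric] vec_eq_iff eq_neg_iff_add_eq_0)
  with y show thesis
    by (intro that outer_prod_eigenvector)
qed

lemma hilbert_map_phi_plus:
  assumes z: "z \<in> real_variety (relation_ideal \<pi>)"
    and y: "phi_gram z = outer_prod y" "\<tau> *v y = - y"
  shows "hilbert_map \<pi> (phi_plus z + y) = z"
proof -
  have plus: "proj_plus \<tau> (phi_plus z + y) = phi_plus z"
    using involution_phi_plus[OF z] y(2) by (rule proj_plus_eigen_sum)
  have minus: "proj_minus \<tau> (phi_plus z + y) = y"
    using involution_phi_plus[OF z] y(2) by (rule proj_minus_eigen_sum)
  have "\<pi> l (phi_plus z + y) = z $ l" for l
  proof -
    have "\<pi> l \<in> invariant_ring G"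
      using fundamental by (rule fundamental_invariants_invariant_ring)
    then have "\<pi> l \<in> polyfun" "\<And>x. \<pi> l (\<tau> *v x) = \<pi> l x"
      by (simp_all add: invariant_ring_eq)
    then obtain F where F: "F \<in> vec_mat_polyfun"
      "\<And>x. \<pi> l x = F (proj_plus \<tau> x) (outer_prod (proj_minus \<tau> x))"
      by (rule invariant_polyfun_involution) auto
    have "\<pi> l (phi_plus z + y) = F (phi_plus z) (phi_gram z)"
      using F(2) plus minus y(1) by simp
    also have "\<dots> = phi \<pi> z (\<lambda>x. F (proj_plus \<tau> x) (outer_prod (proj_minus \<tau> x)))"
      using phi_proj_polyfun[OF z F(1)] ..
    also have "\<dots> = phi \<pi> z (\<pi> l)"
      using F(2) by presburger
    also have "\<dots> = z $ l"
      by (rule phi_eq[OF polyfun.var[of l] _ z]) (simp add: hilbert_map_def)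
    finally show ?thesis .
  qed
  then show ?thesis by (simp add: hilbert_map_def vec_eq_iff)
qed

lemma range_hilbert_mapI:
  assumes "z \<in> real_variety (relation_ideal \<pi>)"
    and "0 \<le> phi \<pi> z (\<lambda>x. \<Sum>i\<in>UNIV. (proj_minus \<tau> x $ i)\<^sup>2)"
  shows "z \<in> range (hilbert_map \<pi>)"
proof -
  obtain y where "phi_gram z = outer_prod y" "\<tau> *v y = - y"
    using phi_gram_outer_prod[OF assms] .
  with hilbert_map_phi_plus[OF assms(1)] show ?thesis
    by (metis rangeI)
qed

end

theorem lemma3p10:
  fixes G :: "(real^'n^'n) set"
    and \<pi> :: "'m::finite \<Rightarrow> (real^'n \<Rightarrow> real)"
    and fi :: "'n \<Rightarrow> (real^'n \<Rightarrow> real)"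
    and f :: "real^'n \<Rightarrow> real"
  assumes "matrix_group G" and "card G = 2"
    and "fundamental_invariants G \<pi>"
    and "\<And>i. fi i = (\<lambda>x. x $ i - reynolds G (\<lambda>y. y $ i) x)"
    and "f = (\<lambda>x. \<Sum>i\<in>UNIV. (fi i x)^2)"
  shows "f \<in> invariant_ring G \<and>
    hilbert_map \<pi> ` UNIV = {z \<in> real_variety (relation_ideal \<pi>). phi \<pi> z f \<ge> 0}"
proof -
  obtain \<tau> where G: "G = {mat 1, \<tau>}" "\<tau> \<noteq> mat 1" and involutive: "\<tau> ** \<tau> = mat 1"
    using matrix_group_card_2[OF assms(1,2)] .
  interpret involution_group G \<tau> \<pi>
    using G(1) involutive assms(3) by unfold_locales
  have f: "f = (\<lambda>x. \<Sum>i\<in>UNIV. (proj_minus \<tau> x $ i)\<^sup>2)"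
    using assms(4,5) reynolds_involution_group_component[OF G involutive]
    by (simp add: proj_minus_def proj_plus_def algebra_simps)
  have f_inv: "f \<in> invariant_ring G"
    unfolding invariant_ring_eq f using involutive
    by (auto intro!: polyfun_sum polyfun.mult polyfun_proj_minus simp: power2_eq_square)
  have "phi \<pi> (hilbert_map \<pi> x) f \<ge> 0" for x
    using phi_hilbert_map[OF assms(3) f_inv] by (simp add: f sum_nonneg)
  then have "range (hilbert_map \<pi>) \<subseteq> {z \<in> real_variety (relation_ideal \<pi>). phi \<pi> z f \<ge> 0}"
    by (auto intro: hilbert_map_in_real_variety)
  moreover have "{z \<in> real_variety (relation_ideal \<pi>). phi \<pi> z f \<ge> 0} \<subseteq> range (hilbert_map \<pi>)"
    using range_hilbert_mapI f by auto
  ultimately show ?thesis using f_inv by blast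
qed

end
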